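(* Let $\Gamma$ be a second countable locally compact abelian group, $n\ge2$, $\omega\in\Gamma^n$, and $X$ a non-empty $\omega$-invariant subset of $\Gamma$. The following are equivalent: (i) $X$ is prime; (ii) for any $\gamma_0,\gamma_1\in X$ and any neighborhoods $U_0,U_1$ of $\gamma_0,\gamma_1$, there exist $\gamma\in X$ and words $\mu,\nu$ with $\gamma+\omega_\mu\in U_0$ and $\gamma+\omega_\nu\in U_1$; (iii) for any $\gamma_0,\gamma_1\in X$ there exist sequences of words $\mu_1,\mu_2,\ldots$ and $\nu_1,\nu_2,\ldots$ with $\gamma_0-\omega_{\mu_k}\in X$, $\gamma_1-\omega_{\nu_k}\in X$ for all $k$ and $\lim_{k\to\infty}\big((\gamma_0-\omega_{\mu_k})-(\gamma_1-\omega_{\nu_k})\big)=0$; (iv) $X=\gamma+\Omega_{\mathbb{I}}$ for some $\gamma\in\Gamma$ and some non-empty $\mathbb{I}\subset\{1,\ldots,n\}$.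
   Context: $\Gamma$ is written additively. Words are finite sequences $\mu=(i_1,\ldots,i_k)$ in $\{1,\ldots,n\}$ (including the empty word), and $\omega_\mu=\sum_j\omega_{i_j}$ ($\omega_\emptyset=0$). A closed $X\subset\Gamma$ is $\omega$-invariant if $X+\omega_i\subset X$ for all $i$ and every $\gamma\in X$ has some $i$ with $\gamma-\omega_i\in X$; it is prime if for all $\omega$-invariant $X_1,X_2$ with $X\subset X_1\cup X_2$ one has $X\subset X_1$ or $X\subset X_2$. For non-empty $\mathbb{I}$, $\Omega_{\mathbb{I}}$ is the closed subsemigroup generated by $\omega_1,\ldots,\omega_n$ and $-\omega_i$ ($i\in\mathbb{I}$). *)

theory Defs
  imports "HOL-Analysis.Analysis"
begin

definition word_sum :: "(nat \<Rightarrow> 'a::comm_monoid_add) \<Rightarrow> nat list \<Rightarrow> 'a" where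
  "word_sum \<omega> \<mu> = sum_list (map \<omega> \<mu>)"

definition is_word :: "nat \<Rightarrow> nat list \<Rightarrow> bool" where
  "is_word n \<mu> \<longleftrightarrow> set \<mu> \<subseteq> {1..n}"

definition omega_invariant :: "nat \<Rightarrow> (nat \<Rightarrow> 'a::{topological_space,ab_group_add}) \<Rightarrow> 'a set \<Rightarrow> bool" where
  "omega_invariant n \<omega> X \<longleftrightarrow> closed X
     \<and> (\<forall>i\<in>{1..n}. \<forall>\<gamma>\<in>X. \<gamma> + \<omega> i \<in> X)
     \<and> (\<forall>\<gamma>\<in>X. \<exists>i\<in>{1..n}. \<gamma> - \<omega> i \<in> X)"

definition omega_prime :: "nat \<Rightarrow> (nat \<Rightarrow> 'a::{topological_space,ab_group_add}) \<Rightarrow> 'a set \<Rightarrow> bool" where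
  "omega_prime n \<omega> X \<longleftrightarrow> (\<forall>X1 X2. omega_invariant n \<omega> X1 \<longrightarrow> omega_invariant n \<omega> X2 \<longrightarrow>
      X \<subseteq> X1 \<union> X2 \<longrightarrow> X \<subseteq> X1 \<or> X \<subseteq> X2)"

definition Omega_set :: "nat \<Rightarrow> (nat \<Rightarrow> 'a::{topological_space,ab_group_add}) \<Rightarrow> nat set \<Rightarrow> 'a set" where
  "Omega_set n \<omega> I = \<Inter>{S. closed S \<and> \<omega> ` {1..n} \<subseteq> S \<and> (\<lambda>i. - \<omega> i) ` I \<subseteq> S
                          \<and> (\<forall>x\<in>S. \<forall>y\<in>S. x + y \<in> S)}"

end

theory Submission
  imports Defs
begin

text \<open>
  Primeness follows from (ii) or (iii): if X \<subseteq> X1 \<union> X2 with \<gamma>0 \<notin> X1 and \<gamma>1 \<notin> X2,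
  then (ii) gives one forward orbit meeting both open complements, while (iii) gives points of X1
  (backward from \<gamma>1, hence outside X2) converging to \<gamma>0.

  Conversely let X be prime, let I be the set of letters i with X - \<omega>_i \<subseteq> X, J the other
  letters, and call m \<in> X minimal if m - \<omega>_j \<notin> X for all j \<in> J. Stepping back along
  J-letters, every point of X either reaches a minimal point or lies on an infinite backward ray
  in some direction j \<in> J. The rays are \<omega>-invariant and cannot contain X, so X lies in the
  closure of the forward orbit of the minimal points. These are stable under the closed subgroup G
  generated by the \<omega>_i, i \<in> I, and an open G-saturated set separating two minimal points in
  different G-cosets would split X into two \<omega>-invariant pieces. Hence the minimal points form
  a single coset p + G, and X = p + \<Omega>_I.

  (iv) gives (ii) because \<Omega>_I is the closure of the differences \<omega>_\<mu> - \<omega>_\<nu> with \<nu> an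
  I-word. For (iii), maximality of I means -\<omega>_j \<notin> \<Omega>_I for j \<in> J; with Dickson's lemma
  this allows only finitely many J-multisets near any compact set, so by local compactness every
  element of \<Omega>_I is a J-word plus an element of G. Stripping the J-words and approximating
  the difference of the G-parts by differences of I-words yields the backward sequences.
\<close>

section \<open>Topological groups and subsequences\<close>

lemma closed_Collect_mem:
  assumes "closed S" "continuous_on UNIV f"
  shows "closed {x. f x \<in> S}"
  using closed_vimage[OF assms] by (simp add: vimage_def)

lemma open_Collect_mem:
  assumes "open S" "continuous_on UNIV f"
  shows "open {x. f x \<in> S}"
  using open_vimage[OF assms] by (simp add: vimage_def)

lemma closure_add_closed:
  fixes A :: "'a::topological_monoid_add set"
  assumes add: "\<And>x y. x \<in> A \<Longrightarrow> y \<in> A \<Longrightarrow> x + y \<in> A"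
    and "x \<in> closure A" "y \<in> closure A"
  shows "x + y \<in> closure A"
proof -
  have left: "(\<lambda>z. a + z) ` closure A \<subseteq> closure A" if "a \<in> A" for a
  proof (rule image_closure_subset)
    show "continuous_on (closure A) (\<lambda>z. a + z)"
      by (intro continuous_intros)
    show "(\<lambda>z. a + z) ` A \<subseteq> closure A"
      using add that closure_subset by blast
  qed simp
  have "(\<lambda>z. z + y) ` closure A \<subseteq> closure A"
  proof (rule image_closure_subset)
    show "continuous_on (closure A) (\<lambda>z. z + y)"
      by (intro continuous_intros)
    show "(\<lambda>z. z + y) ` A \<subseteq> closure A"
      using left \<open>y \<in> closure A\<close> by (auto simp: add.commute)
  qed simp
  then show ?thesis
    using \<open>x \<in> closure A\<close> by blast
qed

lemma closure_uminus_closed: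
  fixes A :: "'a::topological_group_add set"
  assumes "\<And>x. x \<in> A \<Longrightarrow> - x \<in> A" and "x \<in> closure A"
  shows "- x \<in> closure A"
proof -
  have "uminus ` closure A \<subseteq> closure A"
  proof (rule image_closure_subset)
    show "continuous_on (closure A) uminus"
      by (intro continuous_intros)
    show "uminus ` A \<subseteq> closure A"
      using assms(1) closure_subset by blast
  qed simp
  then show ?thesis
    using \<open>x \<in> closure A\<close> by blast
qed

lemma zero_nhd_diff_subset:
  fixes U :: "'a::topological_group_add set"
  assumes "open U" "0 \<in> U"
  obtains V where "open V" "0 \<in> V" "\<And>a b. a \<in> V \<Longrightarrow> b \<in> V \<Longrightarrow> a - b \<in> U"
proof -
  let ?diff = "\<lambda>z::'a \<times> 'a. fst z - snd z"
  have "open (?diff -` U)"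
    by (intro open_vimage assms continuous_intros)
  moreover have "(0, 0) \<in> ?diff -` U"
    using assms by simp
  ultimately obtain A B where "open A" "open B" "(0, 0) \<in> A \<times> B" "A \<times> B \<subseteq> ?diff -` U"
    by (rule open_prod_elim)
  then show ?thesis
    by (intro that[of "A \<inter> B"]) auto
qed

lemma saturated_open_separation:
  fixes G :: "'a::topological_ab_group_add set"
  assumes "closed G" "0 \<in> G" and add: "\<And>x y. x \<in> G \<Longrightarrow> y \<in> G \<Longrightarrow> x + y \<in> G"
    and "p - q \<notin> G"
  obtains W where "open W" "q \<in> W" "p \<notin> closure W" "\<forall>y\<in>W. \<forall>g\<in>G. y + g \<in> W"
proof -
  have "open {w. p - q + w \<in> - G}"
    by (intro open_Collect_mem continuous_intros) (use assms in auto)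
  moreover have "0 \<in> {w. p - q + w \<in> - G}"
    using assms by simp
  ultimately obtain V where V: "open V" "0 \<in> V"
    and small: "\<And>a b. a \<in> V \<Longrightarrow> b \<in> V \<Longrightarrow> p - q + (a - b) \<notin> G"
    by (rule zero_nhd_diff_subset) auto
  define W where "W = (\<Union>g\<in>G. {y. y - (q + g) \<in> V})"
  have "open W"
    unfolding W_def by (intro open_UN ballI open_Collect_mem continuous_intros V(1))
  moreover have "q \<in> W"
    unfolding W_def using V(2) \<open>0 \<in> G\<close> by force
  moreover have "p \<notin> closure W"
  proof -
    have "{y. y - p \<in> V} \<inter> W = {}"
    proof (intro equals0I)
      fix y assume "y \<in> {y. y - p \<in> V} \<inter> W"
      then obtain g where "g \<in> G" "y - p \<in> V" "y - (q + g) \<in> V"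
        unfolding W_def by blast
      then have "p - q + ((y - p) - (y - (q + g))) \<notin> G"
        by (intro small)
      then show False
        using \<open>g \<in> G\<close> by (simp add: algebra_simps)
    qed
    moreover have "open {y. y - p \<in> V}"
      by (intro open_Collect_mem continuous_intros V(1))
    moreover have "p \<in> {y. y - p \<in> V}"
      using V(2) by simp
    ultimately show ?thesis
      using open_Int_closure_eq_empty by blast
  qed
  moreover have "\<forall>y\<in>W. \<forall>g\<in>G. y + g \<in> W"
  proof (intro ballI)
    fix y g assume "y \<in> W" "g \<in> G"
    from \<open>y \<in> W\<close> obtain g' where "g' \<in> G" "y - (q + g') \<in> V"
      unfolding W_def by blast
    moreover have "y + g - (q + (g' + g)) = y - (q + g')"
      by (simp add: algebra_simps)
    ultimately show "y + g \<in> W"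
      unfolding W_def using add[OF \<open>g' \<in> G\<close> \<open>g \<in> G\<close>] by force
  qed
  ultimately show ?thesis
    by (rule that)
qed

lemma closed_stabilizer:
  fixes X :: "'a::topological_monoid_add set"
  assumes "closed X"
  shows "closed {g. \<forall>x\<in>X. x + g \<in> X}"
proof -
  have "closed {g. x + g \<in> X}" for x
    using assms by (rule closed_Collect_mem) (intro continuous_intros)
  then have "closed (\<Inter>x\<in>X. {g. x + g \<in> X})"
    by blast
  moreover have "{g. \<forall>x\<in>X. x + g \<in> X} = (\<Inter>x\<in>X. {g. x + g \<in> X})"
    by blast
  ultimately show ?thesis
    by simp
qed

lemma nat_seq_mono_subseq:
  fixes s :: "nat \<Rightarrow> nat"
  obtains r :: "nat \<Rightarrow> nat" where "strict_mono r" "mono (\<lambda>k. s (r k))"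
proof -
  obtain f where f: "strict_mono f" "monoseq (\<lambda>k. s (f k))"
    using seq_monosub[of s] by blast
  show ?thesis
  proof (cases "mono (\<lambda>k. s (f k))")
    case True
    then show ?thesis
      using that f(1) by blast
  next
    case False
    then have dec: "s (f l) \<le> s (f k)" if "k \<le> l" for k l
      using f(2) that unfolding monoseq_def mono_def by blast
    define v where "v = (LEAST v. \<exists>k. s (f k) = v)"
    have "\<exists>k. s (f k) = v"
      unfolding v_def by (rule LeastI_ex) blast
    then obtain N where N: "s (f N) = v" ..
    have "s (f k) = v" if "N \<le> k" for k
    proof (rule antisym)
      show "s (f k) \<le> v"
        using dec[OF that] N by simp
      show "v \<le> s (f k)"
        unfolding v_def by (rule Least_le) blast
    qed
    then have "mono (\<lambda>k. s (f (k + N)))"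
      by (intro monoI) simp
    moreover have "strict_mono (\<lambda>k. f (k + N))"
      using f(1) unfolding strict_mono_def by simp
    ultimately show ?thesis
      using that by blast
  qed
qed

lemma finite_mono_subseq:
  fixes F :: "nat \<Rightarrow> 'b \<Rightarrow> nat"
  assumes "finite J"
  shows "\<exists>r :: nat \<Rightarrow> nat. strict_mono r \<and> (\<forall>t\<in>J. mono (\<lambda>k. F (r k) t))"
  using assms
proof (induction J rule: finite_induct)
  case empty
  have "strict_mono (id :: nat \<Rightarrow> nat)"
    by (simp add: strict_mono_def)
  then show ?case
    by blast
next
  case (insert t J)
  then obtain r :: "nat \<Rightarrow> nat" where r: "strict_mono r" "\<forall>t\<in>J. mono (\<lambda>k. F (r k) t)"
    by blast
  obtain r' :: "nat \<Rightarrow> nat" where r': "strict_mono r'" "mono (\<lambda>k. F (r (r' k)) t)"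
    by (rule nat_seq_mono_subseq[of "\<lambda>k. F (r k) t"])
  have "mono (\<lambda>k. F (r (r' k)) t')" if "t' \<in> J" for t'
    using monoD[OF r(2)[rule_format, OF that]] monoD[OF strict_mono_mono[OF r'(1)]]
    by (intro monoI) simp
  then show ?case
    using r' strict_mono_o[OF r(1) r'(1)] by (intro exI[of _ "r \<circ> r'"]) (auto simp: comp_def)
qed

lemma multiset_chain_with_close_values:
  fixes f :: "nat \<Rightarrow> 'b multiset" and c :: "nat \<Rightarrow> 'a::{topological_group_add, first_countable_topology}"
  assumes "inj f" "finite J" "\<And>k. set_mset (f k) \<subseteq> J"
    and "compact K" "\<And>k. c k \<in> K" and "open Q" "0 \<in> Q"
  obtains k l where "f k \<subset># f l" "c l - c k \<in> Q"
proof -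
  obtain r :: "nat \<Rightarrow> nat" where r: "strict_mono r" "\<forall>t\<in>J. mono (\<lambda>k. count (f (r k)) t)"
    using finite_mono_subseq[OF \<open>finite J\<close>, of "\<lambda>k. count (f k)"] by blast
  have "\<forall>k. (c \<circ> r) k \<in> K"
    using assms(5) by simp
  with compact_imp_seq_compact[OF \<open>compact K\<close>]
  obtain L and r' :: "nat \<Rightarrow> nat" where r': "L \<in> K" "strict_mono r'" "(c \<circ> r \<circ> r') \<longlonglongrightarrow> L"
    by (rule seq_compactE)
  define s where "s = r \<circ> r'"
  have "strict_mono s"
    unfolding s_def using r(1) r'(2) by (rule strict_mono_o)
  have "(\<lambda>k. c (s k)) \<longlonglongrightarrow> L"
    using r'(3) by (simp add: s_def comp_def)
  from tendsto_diff[OF LIMSEQ_Suc[OF this] this]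
  have "(\<lambda>k. c (s (Suc k)) - c (s k)) \<longlonglongrightarrow> 0"
    by simp
  from topological_tendstoD[OF this \<open>open Q\<close> \<open>0 \<in> Q\<close>]
  obtain k where k: "c (s (Suc k)) - c (s k) \<in> Q"
    by (auto dest: eventually_happens)
  have "count (f (s k)) t \<le> count (f (s (Suc k))) t" for t
  proof (cases "t \<in> J")
    case True
    have "r' k \<le> r' (Suc k)"
      using r'(2) by (simp add: strict_mono_less_eq)
    then show ?thesis
      using monoD[OF r(2)[rule_format, OF True]] by (simp add: s_def)
  next
    case False
    then have "count (f (s k)) t = 0"
      using assms(3)[of "s k"] by (auto simp: count_eq_zero_iff)
    then show ?thesis
      by simp
  qed
  moreover have "f (s k) \<noteq> f (s (Suc k))"
    using \<open>inj f\<close> strict_monoD[OF \<open>strict_mono s\<close>, of k "Suc k"] by (auto dest: injD)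
  ultimately have "f (s k) \<subset># f (s (Suc k))"
    by (simp add: subset_mset_def subseteq_mset_def)
  then show ?thesis
    using k by (rule that)
qed

section \<open>Words and \<omega>-invariant sets\<close>

lemma word_sum_Nil [simp]: "word_sum \<omega> [] = 0"
  by (simp add: word_sum_def)

lemma word_sum_Cons [simp]: "word_sum \<omega> (i # \<mu>) = \<omega> i + word_sum \<omega> \<mu>"
  by (simp add: word_sum_def)

lemma word_sum_append [simp]: "word_sum \<omega> (\<mu> @ \<nu>) = word_sum \<omega> \<mu> + word_sum \<omega> \<nu>"
  by (simp add: word_sum_def)

lemma word_sum_remove1:
  "i \<in> set \<mu> \<Longrightarrow> word_sum \<omega> \<mu> = \<omega> i + word_sum \<omega> (remove1 i \<mu>)"
  by (simp add: word_sum_def sum_list_map_remove1)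

lemma word_sum_filter:
  "word_sum \<omega> \<mu> = word_sum \<omega> (filter P \<mu>) + word_sum \<omega> (filter (\<lambda>i. \<not> P i) \<mu>)"
  by (induction \<mu>) (simp_all add: algebra_simps)

lemma word_sum_eq_sum_mset: "word_sum \<omega> \<mu> = sum_mset (image_mset \<omega> (mset \<mu>))"
  unfolding word_sum_def by (metis mset_map sum_mset_sum_list)

lemma is_word_Nil [simp]: "is_word n []"
  by (simp add: is_word_def)

lemma is_word_Cons [simp]: "is_word n (i # \<mu>) \<longleftrightarrow> i \<in> {1..n} \<and> is_word n \<mu>"
  by (simp add: is_word_def)

lemma is_word_append [simp]: "is_word n (\<mu> @ \<nu>) \<longleftrightarrow> is_word n \<mu> \<and> is_word n \<nu>"
  by (simp add: is_word_def)

definition common_forward_approximation :: "nat \<Rightarrow> (nat \<Rightarrow> 'a::{topological_space, comm_monoid_add}) \<Rightarrow> 'a set \<Rightarrow> bool" where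
  "common_forward_approximation n \<omega> X \<longleftrightarrow>
     (\<forall>\<gamma>0\<in>X. \<forall>\<gamma>1\<in>X. \<forall>U0 U1. open U0 \<longrightarrow> open U1 \<longrightarrow> \<gamma>0 \<in> U0 \<longrightarrow> \<gamma>1 \<in> U1 \<longrightarrow>
        (\<exists>\<gamma>\<in>X. \<exists>\<mu> \<nu>. is_word n \<mu> \<and> is_word n \<nu> \<and>
            \<gamma> + word_sum \<omega> \<mu> \<in> U0 \<and> \<gamma> + word_sum \<omega> \<nu> \<in> U1))"

definition asymptotic_backward_words :: "nat \<Rightarrow> (nat \<Rightarrow> 'a::{topological_space, ab_group_add}) \<Rightarrow> 'a set \<Rightarrow> bool" where
  "asymptotic_backward_words n \<omega> X \<longleftrightarrow>
     (\<forall>\<gamma>0\<in>X. \<forall>\<gamma>1\<in>X. \<exists>\<mu>s \<nu>s :: nat \<Rightarrow> nat list.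
        (\<forall>k. is_word n (\<mu>s k) \<and> is_word n (\<nu>s k)
             \<and> \<gamma>0 - word_sum \<omega> (\<mu>s k) \<in> X \<and> \<gamma>1 - word_sum \<omega> (\<nu>s k) \<in> X)
        \<and> (\<lambda>k. (\<gamma>0 - word_sum \<omega> (\<mu>s k)) - (\<gamma>1 - word_sum \<omega> (\<nu>s k))) \<longlonglongrightarrow> 0)"

definition backward_letters :: "nat \<Rightarrow> (nat \<Rightarrow> 'a::ab_group_add) \<Rightarrow> 'a set \<Rightarrow> nat set" where
  "backward_letters n \<omega> X = {i \<in> {1..n}. \<forall>x\<in>X. x - \<omega> i \<in> X}"

lemma backward_letters_subset: "backward_letters n \<omega> X \<subseteq> {1..n}"
  by (auto simp: backward_letters_def)

context
  fixes n :: nat and \<omega> :: "nat \<Rightarrow> 'a::topological_ab_group_add"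
begin

lemma omega_invariant_closed: "omega_invariant n \<omega> Y \<Longrightarrow> closed Y"
  by (simp add: omega_invariant_def)

lemma omega_invariant_add_omega:
  "omega_invariant n \<omega> Y \<Longrightarrow> y \<in> Y \<Longrightarrow> i \<in> {1..n} \<Longrightarrow> y + \<omega> i \<in> Y"
  by (simp add: omega_invariant_def)

lemma omega_invariant_backward_step:
  "omega_invariant n \<omega> Y \<Longrightarrow> y \<in> Y \<Longrightarrow> \<exists>i\<in>{1..n}. y - \<omega> i \<in> Y"
  by (simp add: omega_invariant_def)

lemma omega_invariant_diff_omega_notin:
  "omega_invariant n \<omega> Y \<Longrightarrow> i \<in> {1..n} \<Longrightarrow> y \<notin> Y \<Longrightarrow> y - \<omega> i \<notin> Y"
  by (metis diff_add_cancel omega_invariant_add_omega)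

lemma omega_invariant_add_word:
  "omega_invariant n \<omega> Y \<Longrightarrow> y \<in> Y \<Longrightarrow> is_word n \<mu> \<Longrightarrow> y + word_sum \<omega> \<mu> \<in> Y"
  by (induction \<mu> arbitrary: y) (auto simp: add.assoc[symmetric] omega_invariant_add_omega)

lemma omega_invariant_empty: "omega_invariant n \<omega> {}"
  by (simp add: omega_invariant_def)

lemma omega_invariant_Un:
  "omega_invariant n \<omega> Y1 \<Longrightarrow> omega_invariant n \<omega> Y2 \<Longrightarrow> omega_invariant n \<omega> (Y1 \<union> Y2)"
  unfolding omega_invariant_def by blast

lemma omega_invariant_Union:
  "finite F \<Longrightarrow> (\<And>Y. Y \<in> F \<Longrightarrow> omega_invariant n \<omega> Y) \<Longrightarrow> omega_invariant n \<omega> (\<Union>F)"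
  by (induction F rule: finite_induct) (auto intro: omega_invariant_Un omega_invariant_empty)

lemma omega_prime_finite_cover:
  assumes "omega_prime n \<omega> X" "X \<noteq> {}"
    and "finite F" "\<And>Y. Y \<in> F \<Longrightarrow> omega_invariant n \<omega> Y" "X \<subseteq> \<Union>F"
  shows "\<exists>Y\<in>F. X \<subseteq> Y"
  using assms(3-)
proof (induction F rule: finite_induct)
  case empty
  then show ?case using \<open>X \<noteq> {}\<close> by simp
next
  case (insert Y F)
  then have "omega_invariant n \<omega> Y" "omega_invariant n \<omega> (\<Union>F)" "X \<subseteq> Y \<union> \<Union>F"
    by (auto intro: omega_invariant_Union)
  then have "X \<subseteq> Y \<or> X \<subseteq> \<Union>F"
    using \<open>omega_prime n \<omega> X\<close> unfolding omega_prime_def by blast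
  then show ?case
    using insert by blast
qed

lemma omega_prime_if_common_forward_approximation:
  assumes "common_forward_approximation n \<omega> X"
  shows "omega_prime n \<omega> X"
  unfolding omega_prime_def
proof (intro allI impI)
  fix X1 X2
  assume inv: "omega_invariant n \<omega> X1" "omega_invariant n \<omega> X2" and cover: "X \<subseteq> X1 \<union> X2"
  show "X \<subseteq> X1 \<or> X \<subseteq> X2"
  proof (rule ccontr)
    assume "\<not> (X \<subseteq> X1 \<or> X \<subseteq> X2)"
    then obtain \<gamma>0 \<gamma>1 where "\<gamma>0 \<in> X" "\<gamma>0 \<in> - X1" "\<gamma>1 \<in> X" "\<gamma>1 \<in> - X2"
      by blast
    moreover have "open (- X1)" "open (- X2)"
      using inv by (auto intro: omega_invariant_closed)
    ultimately obtain \<gamma> \<mu> \<nu> where "\<gamma> \<in> X" "is_word n \<mu>" "is_word n \<nu>"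
      "\<gamma> + word_sum \<omega> \<mu> \<notin> X1" "\<gamma> + word_sum \<omega> \<nu> \<notin> X2"
      using assms unfolding common_forward_approximation_def by (metis ComplD)
    then show False
      using cover omega_invariant_add_word[OF inv(1)] omega_invariant_add_word[OF inv(2)] by blast
  qed
qed

lemma omega_prime_if_asymptotic_backward_words:
  assumes "asymptotic_backward_words n \<omega> X"
  shows "omega_prime n \<omega> X"
  unfolding omega_prime_def
proof (intro allI impI)
  fix X1 X2
  assume inv: "omega_invariant n \<omega> X1" "omega_invariant n \<omega> X2" and cover: "X \<subseteq> X1 \<union> X2"
  show "X \<subseteq> X1 \<or> X \<subseteq> X2"
  proof (rule ccontr)
    assume "\<not> (X \<subseteq> X1 \<or> X \<subseteq> X2)"
    then obtain \<gamma>0 \<gamma>1 where "\<gamma>0 \<in> X" "\<gamma>0 \<notin> X1" "\<gamma>1 \<in> X" "\<gamma>1 \<notin> X2"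
      by blast
    then obtain \<mu>s \<nu>s where words: "\<And>k. is_word n (\<mu>s k) \<and> is_word n (\<nu>s k)
        \<and> \<gamma>0 - word_sum \<omega> (\<mu>s k) \<in> X \<and> \<gamma>1 - word_sum \<omega> (\<nu>s k) \<in> X"
      and lim: "(\<lambda>k. (\<gamma>0 - word_sum \<omega> (\<mu>s k)) - (\<gamma>1 - word_sum \<omega> (\<nu>s k))) \<longlonglongrightarrow> 0"
      using assms unfolding asymptotic_backward_words_def by blast
    (* The backward points of \<gamma>1 lie in X1, as their forward orbits reach \<gamma>1 \<notin> X2;
       moving them forward along \<mu>s gives points of X1 converging to \<gamma>0. *)
    define x where "x k = \<gamma>1 - word_sum \<omega> (\<nu>s k) + word_sum \<omega> (\<mu>s k)" for k
    have x_in: "x k \<in> X1" for k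
    proof -
      have "\<gamma>1 - word_sum \<omega> (\<nu>s k) + word_sum \<omega> (\<nu>s k) \<notin> X2"
        using \<open>\<gamma>1 \<notin> X2\<close> by simp
      then have "\<gamma>1 - word_sum \<omega> (\<nu>s k) \<in> X1"
        using cover words[of k] omega_invariant_add_word[OF inv(2)] by blast
      then show ?thesis
        unfolding x_def using words[of k] omega_invariant_add_word[OF inv(1)] by blast
    qed
    have x_lim: "x \<longlonglongrightarrow> \<gamma>0"
    proof -
      have "(\<lambda>k. \<gamma>0 - ((\<gamma>0 - word_sum \<omega> (\<mu>s k)) - (\<gamma>1 - word_sum \<omega> (\<nu>s k)))) \<longlonglongrightarrow> \<gamma>0 - 0"
        by (intro tendsto_diff tendsto_const lim)
      moreover have "(\<lambda>k. \<gamma>0 - ((\<gamma>0 - word_sum \<omega> (\<mu>s k)) - (\<gamma>1 - word_sum \<omega> (\<nu>s k)))) = x"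
        by (simp add: x_def fun_eq_iff algebra_simps)
      ultimately show ?thesis
        by simp
    qed
    have "\<gamma>0 \<in> X1"
      using omega_invariant_closed[OF inv(1)] x_in x_lim by (rule closed_sequentially)
    then show False
      using \<open>\<gamma>0 \<notin> X1\<close> by blast
  qed
qed

end

section \<open>The semigroups \<Omega>_I\<close>

definition Omega_words :: "nat \<Rightarrow> (nat \<Rightarrow> 'a::ab_group_add) \<Rightarrow> nat set \<Rightarrow> 'a set" where
  "Omega_words n \<omega> I = {word_sum \<omega> \<mu> - word_sum \<omega> \<nu> | \<mu> \<nu>. is_word n \<mu> \<and> set \<nu> \<subseteq> I}"

definition group_words :: "(nat \<Rightarrow> 'a::ab_group_add) \<Rightarrow> nat set \<Rightarrow> 'a set" where
  "group_words \<omega> I = {word_sum \<omega> \<mu> - word_sum \<omega> \<nu> | \<mu> \<nu>. set \<mu> \<subseteq> I \<and> set \<nu> \<subseteq> I}"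

definition split_word_sums :: "nat \<Rightarrow> (nat \<Rightarrow> 'a::ab_group_add) \<Rightarrow> nat set \<Rightarrow> 'a set" where
  "split_word_sums n \<omega> I =
     {word_sum \<omega> \<rho> + h | \<rho> h. set \<rho> \<subseteq> {1..n} - I \<and> h \<in> group_words \<omega> I}"

context
  fixes n :: nat and \<omega> :: "nat \<Rightarrow> 'a::topological_ab_group_add"
begin

lemma Omega_set_closed: "closed (Omega_set n \<omega> I)"
  unfolding Omega_set_def by (rule closed_Inter) auto

lemma omega_mem_Omega_set: "i \<in> {1..n} \<Longrightarrow> \<omega> i \<in> Omega_set n \<omega> I"
  unfolding Omega_set_def by auto

lemma neg_omega_mem_Omega_set: "i \<in> I \<Longrightarrow> - \<omega> i \<in> Omega_set n \<omega> I"
  unfolding Omega_set_def by auto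

lemma Omega_set_add:
  "x \<in> Omega_set n \<omega> I \<Longrightarrow> y \<in> Omega_set n \<omega> I \<Longrightarrow> x + y \<in> Omega_set n \<omega> I"
  unfolding Omega_set_def by auto

lemma Omega_set_minimal:
  assumes "closed S" "\<omega> ` {1..n} \<subseteq> S" "(\<lambda>i. - \<omega> i) ` I \<subseteq> S"
    and "\<And>x y. x \<in> S \<Longrightarrow> y \<in> S \<Longrightarrow> x + y \<in> S"
  shows "Omega_set n \<omega> I \<subseteq> S"
  unfolding Omega_set_def using assms by auto

lemma zero_mem_Omega_set:
  assumes "I \<noteq> {}" "I \<subseteq> {1..n}"
  shows "0 \<in> Omega_set n \<omega> I"
proof -
  obtain i where "i \<in> I" "i \<in> {1..n}"
    using assms by blast
  then have "\<omega> i + - \<omega> i \<in> Omega_set n \<omega> I"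
    by (intro Omega_set_add omega_mem_Omega_set neg_omega_mem_Omega_set)
  then show ?thesis
    by simp
qed

lemma word_sum_mem_Omega_set:
  "0 \<in> Omega_set n \<omega> I \<Longrightarrow> is_word n \<mu> \<Longrightarrow> word_sum \<omega> \<mu> \<in> Omega_set n \<omega> I"
  by (induction \<mu>) (auto intro!: Omega_set_add omega_mem_Omega_set)

lemma neg_word_sum_mem_Omega_set:
  "0 \<in> Omega_set n \<omega> I \<Longrightarrow> set \<nu> \<subseteq> I \<Longrightarrow> - word_sum \<omega> \<nu> \<in> Omega_set n \<omega> I"
proof (induction \<nu>)
  case (Cons i \<nu>)
  then have "- \<omega> i + - word_sum \<omega> \<nu> \<in> Omega_set n \<omega> I"
    by (intro Omega_set_add neg_omega_mem_Omega_set) auto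
  then show ?case
    by (simp add: algebra_simps)
qed simp

lemma diff_word_sum_mem:
  assumes "I \<subseteq> backward_letters n \<omega> X" "set \<nu> \<subseteq> I" "x \<in> X"
  shows "x - word_sum \<omega> \<nu> \<in> X"
  using assms(2,3)
proof (induction \<nu> arbitrary: x)
  case (Cons i \<nu>)
  then have "x - \<omega> i - word_sum \<omega> \<nu> \<in> X"
    using assms(1) by (auto simp: backward_letters_def)
  then show ?case
    by (simp add: algebra_simps)
qed simp

lemma add_Omega_set_mem:
  assumes inv: "omega_invariant n \<omega> X" and I: "I \<subseteq> backward_letters n \<omega> X"
    and "x \<in> X" "s \<in> Omega_set n \<omega> I"
  shows "x + s \<in> X"
proof -
  have "Omega_set n \<omega> I \<subseteq> {g. \<forall>x\<in>X. x + g \<in> X}"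
  proof (rule Omega_set_minimal)
    show "closed {g. \<forall>x\<in>X. x + g \<in> X}"
      using inv by (intro closed_stabilizer omega_invariant_closed)
    show "\<omega> ` {1..n} \<subseteq> {g. \<forall>x\<in>X. x + g \<in> X}"
      using inv by (auto intro: omega_invariant_add_omega)
    show "(\<lambda>i. - \<omega> i) ` I \<subseteq> {g. \<forall>x\<in>X. x + g \<in> X}"
      using I by (auto simp: backward_letters_def)
  qed (simp add: add.assoc[symmetric])
  then show ?thesis
    using assms(3,4) by blast
qed

lemma neg_omega_notin_Omega_set:
  assumes "omega_invariant n \<omega> X" "j \<in> {1..n} - backward_letters n \<omega> X"
  shows "- \<omega> j \<notin> Omega_set n \<omega> (backward_letters n \<omega> X)"
proof
  assume "- \<omega> j \<in> Omega_set n \<omega> (backward_letters n \<omega> X)"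
  then have "x + - \<omega> j \<in> X" if "x \<in> X" for x
    using add_Omega_set_mem[OF assms(1) subset_refl that] by blast
  then show False
    using assms(2) by (auto simp: backward_letters_def)
qed

lemma Omega_words_add:
  "x \<in> Omega_words n \<omega> I \<Longrightarrow> y \<in> Omega_words n \<omega> I \<Longrightarrow> x + y \<in> Omega_words n \<omega> I"
proof -
  assume "x \<in> Omega_words n \<omega> I" "y \<in> Omega_words n \<omega> I"
  then obtain \<mu> \<nu> \<mu>' \<nu>' where x: "x = word_sum \<omega> \<mu> - word_sum \<omega> \<nu>" "is_word n \<mu>" "set \<nu> \<subseteq> I"
    and y: "y = word_sum \<omega> \<mu>' - word_sum \<omega> \<nu>'" "is_word n \<mu>'" "set \<nu>' \<subseteq> I"
    unfolding Omega_words_def by blast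
  have "x + y = word_sum \<omega> (\<mu> @ \<mu>') - word_sum \<omega> (\<nu> @ \<nu>')"
    unfolding x(1) y(1) by (simp add: algebra_simps)
  moreover have "is_word n (\<mu> @ \<mu>')" "set (\<nu> @ \<nu>') \<subseteq> I"
    using x y by simp_all
  ultimately show ?thesis
    unfolding Omega_words_def by blast
qed

lemma Omega_set_subset_closure_Omega_words:
  "Omega_set n \<omega> I \<subseteq> closure (Omega_words n \<omega> I)"
proof (rule Omega_set_minimal)
  have "\<omega> i \<in> Omega_words n \<omega> I" if "i \<in> {1..n}" for i
    unfolding Omega_words_def using that
    by (intro CollectI exI[of _ "[i]"] exI[of _ "[]"]) simp
  moreover have "- \<omega> i \<in> Omega_words n \<omega> I" if "i \<in> I" for i
    unfolding Omega_words_def using that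
    by (intro CollectI exI[of _ "[]"] exI[of _ "[i]"]) simp
  ultimately have "\<omega> ` {1..n} \<subseteq> Omega_words n \<omega> I" "(\<lambda>i. - \<omega> i) ` I \<subseteq> Omega_words n \<omega> I"
    by blast+
  then show "\<omega> ` {1..n} \<subseteq> closure (Omega_words n \<omega> I)"
    "(\<lambda>i. - \<omega> i) ` I \<subseteq> closure (Omega_words n \<omega> I)"
    using closure_subset by blast+
  show "\<And>x y. x \<in> closure (Omega_words n \<omega> I) \<Longrightarrow> y \<in> closure (Omega_words n \<omega> I)
      \<Longrightarrow> x + y \<in> closure (Omega_words n \<omega> I)"
    by (rule closure_add_closed[OF Omega_words_add])
qed simp

lemma common_forward_approximation_translate_Omega_set:
  assumes "I \<noteq> {}" "I \<subseteq> {1..n}"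
  shows "common_forward_approximation n \<omega> ((\<lambda>x. \<gamma> + x) ` Omega_set n \<omega> I)"
proof -
  have approx: "\<exists>\<mu> \<nu>. is_word n \<mu> \<and> set \<nu> \<subseteq> I \<and> \<gamma> + (word_sum \<omega> \<mu> - word_sum \<omega> \<nu>) \<in> U"
    if "open U" "\<gamma> + a \<in> U" "a \<in> Omega_set n \<omega> I" for U a
  proof -
    have "open {y. \<gamma> + y \<in> U}"
      by (intro open_Collect_mem continuous_intros \<open>open U\<close>)
    moreover have "a \<in> {y. \<gamma> + y \<in> U} \<inter> closure (Omega_words n \<omega> I)"
      using that Omega_set_subset_closure_Omega_words by blast
    ultimately have "{y. \<gamma> + y \<in> U} \<inter> Omega_words n \<omega> I \<noteq> {}"
      using open_Int_closure_eq_empty by blast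
    then show ?thesis
      unfolding Omega_words_def by blast
  qed
  have zero: "0 \<in> Omega_set n \<omega> I"
    using assms by (rule zero_mem_Omega_set)
  show ?thesis
    unfolding common_forward_approximation_def
  proof (intro ballI allI impI)
    fix \<gamma>0 \<gamma>1 U0 U1
    assume "\<gamma>0 \<in> (\<lambda>x. \<gamma> + x) ` Omega_set n \<omega> I" "\<gamma>1 \<in> (\<lambda>x. \<gamma> + x) ` Omega_set n \<omega> I"
      and "open U0" "open U1" "\<gamma>0 \<in> U0" "\<gamma>1 \<in> U1"
    then obtain a b where "a \<in> Omega_set n \<omega> I" "b \<in> Omega_set n \<omega> I" "\<gamma> + a \<in> U0" "\<gamma> + b \<in> U1"
      by blast
    then obtain \<mu>0 \<nu>0 \<mu>1 \<nu>1 where w: "is_word n \<mu>0" "set \<nu>0 \<subseteq> I" "is_word n \<mu>1" "set \<nu>1 \<subseteq> I"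
      and U: "\<gamma> + (word_sum \<omega> \<mu>0 - word_sum \<omega> \<nu>0) \<in> U0" "\<gamma> + (word_sum \<omega> \<mu>1 - word_sum \<omega> \<nu>1) \<in> U1"
      using approx[OF \<open>open U0\<close>] approx[OF \<open>open U1\<close>] by metis
    (* a common starting point far enough back to absorb both \<nu>0 and \<nu>1 *)
    define \<gamma>' where "\<gamma>' = \<gamma> + - word_sum \<omega> (\<nu>0 @ \<nu>1)"
    have "\<gamma>' \<in> (\<lambda>x. \<gamma> + x) ` Omega_set n \<omega> I"
      unfolding \<gamma>'_def using neg_word_sum_mem_Omega_set[OF zero, of "\<nu>0 @ \<nu>1"] w by auto
    moreover have "is_word n (\<mu>0 @ \<nu>1)" "is_word n (\<mu>1 @ \<nu>0)"
      using w assms(2) by (auto simp: is_word_def)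
    moreover have "\<gamma>' + word_sum \<omega> (\<mu>0 @ \<nu>1) = \<gamma> + (word_sum \<omega> \<mu>0 - word_sum \<omega> \<nu>0)"
      "\<gamma>' + word_sum \<omega> (\<mu>1 @ \<nu>0) = \<gamma> + (word_sum \<omega> \<mu>1 - word_sum \<omega> \<nu>1)"
      unfolding \<gamma>'_def by (simp_all add: algebra_simps)
    ultimately show "\<exists>\<gamma>'\<in>(\<lambda>x. \<gamma> + x) ` Omega_set n \<omega> I. \<exists>\<mu> \<nu>. is_word n \<mu> \<and> is_word n \<nu> \<and>
        \<gamma>' + word_sum \<omega> \<mu> \<in> U0 \<and> \<gamma>' + word_sum \<omega> \<nu> \<in> U1"
      using U by metis
  qed
qed

lemma group_words_add:
  "x \<in> group_words \<omega> I \<Longrightarrow> y \<in> group_words \<omega> I \<Longrightarrow> x + y \<in> group_words \<omega> I"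
proof -
  assume "x \<in> group_words \<omega> I" "y \<in> group_words \<omega> I"
  then obtain \<mu> \<nu> \<mu>' \<nu>' where x: "x = word_sum \<omega> \<mu> - word_sum \<omega> \<nu>" "set \<mu> \<subseteq> I" "set \<nu> \<subseteq> I"
    and y: "y = word_sum \<omega> \<mu>' - word_sum \<omega> \<nu>'" "set \<mu>' \<subseteq> I" "set \<nu>' \<subseteq> I"
    unfolding group_words_def by blast
  have "x + y = word_sum \<omega> (\<mu> @ \<mu>') - word_sum \<omega> (\<nu> @ \<nu>')"
    unfolding x(1) y(1) by (simp add: algebra_simps)
  moreover have "set (\<mu> @ \<mu>') \<subseteq> I" "set (\<nu> @ \<nu>') \<subseteq> I"
    using x y by simp_all
  ultimately show ?thesis
    unfolding group_words_def by blast
qed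

lemma group_words_uminus:
  assumes "x \<in> group_words \<omega> I"
  shows "- x \<in> group_words \<omega> I"
proof -
  obtain \<mu> \<nu> where "x = word_sum \<omega> \<mu> - word_sum \<omega> \<nu>" "set \<mu> \<subseteq> I" "set \<nu> \<subseteq> I"
    using assms unfolding group_words_def by blast
  then have "- x = word_sum \<omega> \<nu> - word_sum \<omega> \<mu>" "set \<nu> \<subseteq> I" "set \<mu> \<subseteq> I"
    by simp_all
  then show ?thesis
    unfolding group_words_def by blast
qed

lemma word_sum_mem_group_words: "set \<mu> \<subseteq> I \<Longrightarrow> word_sum \<omega> \<mu> \<in> group_words \<omega> I"
  unfolding group_words_def by (intro CollectI exI[of _ \<mu>] exI[of _ "[]"]) simp

lemma zero_mem_closure_group_words: "0 \<in> closure (group_words \<omega> I)"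
  using word_sum_mem_group_words[of "[]"] closure_subset by fastforce

lemma closure_group_words_add:
  "x \<in> closure (group_words \<omega> I) \<Longrightarrow> y \<in> closure (group_words \<omega> I) \<Longrightarrow> x + y \<in> closure (group_words \<omega> I)"
  by (rule closure_add_closed[OF group_words_add])

lemma closure_group_words_uminus:
  "x \<in> closure (group_words \<omega> I) \<Longrightarrow> - x \<in> closure (group_words \<omega> I)"
  by (rule closure_uminus_closed[OF group_words_uminus])

lemma closure_group_words_diff:
  assumes "x \<in> closure (group_words \<omega> I)" "y \<in> closure (group_words \<omega> I)"
  shows "x - y \<in> closure (group_words \<omega> I)"
  using closure_group_words_add[OF assms(1) closure_group_words_uminus[OF assms(2)]] by simp

lemma closure_group_words_subset_Omega_set:
  assumes "I \<subseteq> {1..n}" "0 \<in> Omega_set n \<omega> I"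
  shows "closure (group_words \<omega> I) \<subseteq> Omega_set n \<omega> I"
proof (rule closure_minimal)
  show "group_words \<omega> I \<subseteq> Omega_set n \<omega> I"
  proof
    fix g assume "g \<in> group_words \<omega> I"
    then obtain \<mu> \<nu> where g: "g = word_sum \<omega> \<mu> - word_sum \<omega> \<nu>" and "set \<mu> \<subseteq> I" "set \<nu> \<subseteq> I"
      unfolding group_words_def by blast
    with assms have "word_sum \<omega> \<mu> + - word_sum \<omega> \<nu> \<in> Omega_set n \<omega> I"
      by (intro Omega_set_add word_sum_mem_Omega_set neg_word_sum_mem_Omega_set) (auto simp: is_word_def)
    then show "g \<in> Omega_set n \<omega> I"
      by (simp add: g)
  qed
qed (rule Omega_set_closed)

lemma Omega_words_subset_split_word_sums: "Omega_words n \<omega> I \<subseteq> split_word_sums n \<omega> I"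
proof
  fix x assume "x \<in> Omega_words n \<omega> I"
  then obtain \<mu> \<nu> where x: "x = word_sum \<omega> \<mu> - word_sum \<omega> \<nu>" and "is_word n \<mu>" "set \<nu> \<subseteq> I"
    unfolding Omega_words_def by blast
  let ?J = "{1..n} - I"
  have "x = word_sum \<omega> (filter (\<lambda>i. i \<in> ?J) \<mu>)
      + (word_sum \<omega> (filter (\<lambda>i. i \<notin> ?J) \<mu>) - word_sum \<omega> \<nu>)"
    unfolding x using word_sum_filter[of \<omega> \<mu> "\<lambda>i. i \<in> ?J"] by (simp add: algebra_simps)
  moreover have "set (filter (\<lambda>i. i \<notin> ?J) \<mu>) \<subseteq> I"
    using \<open>is_word n \<mu>\<close> by (auto simp: is_word_def)
  then have "word_sum \<omega> (filter (\<lambda>i. i \<notin> ?J) \<mu>) - word_sum \<omega> \<nu> \<in> group_words \<omega> I"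
    using \<open>set \<nu> \<subseteq> I\<close> unfolding group_words_def by blast
  ultimately show "x \<in> split_word_sums n \<omega> I"
    unfolding split_word_sums_def by force
qed

lemma split_word_sums_subset_Omega_set:
  assumes "I \<subseteq> {1..n}" "0 \<in> Omega_set n \<omega> I"
  shows "split_word_sums n \<omega> I \<subseteq> Omega_set n \<omega> I"
proof
  fix y assume "y \<in> split_word_sums n \<omega> I"
  then obtain \<rho> h where "y = word_sum \<omega> \<rho> + h" "set \<rho> \<subseteq> {1..n} - I" "h \<in> group_words \<omega> I"
    unfolding split_word_sums_def by blast
  moreover have "h \<in> Omega_set n \<omega> I"
    using closure_group_words_subset_Omega_set[OF assms] closure_subset \<open>h \<in> group_words \<omega> I\<close> by blast
  ultimately show "y \<in> Omega_set n \<omega> I"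
    using assms by (auto simp: is_word_def intro!: Omega_set_add word_sum_mem_Omega_set)
qed

lemma strict_submultiset_diff_mem_split_word_sums:
  assumes "mset \<rho> \<subset># mset \<rho>'" "set \<rho>' \<subseteq> {1..n} - I" "h \<in> group_words \<omega> I" "h' \<in> group_words \<omega> I"
  obtains j where "j \<in> {1..n} - I"
    "word_sum \<omega> \<rho>' + h' - (word_sum \<omega> \<rho> + h) - \<omega> j \<in> split_word_sums n \<omega> I"
proof -
  define D where "D = mset \<rho>' - mset \<rho>"
  have "mset \<rho> \<subseteq># mset \<rho>'" "mset \<rho> \<noteq> mset \<rho>'"
    using assms(1) by (simp_all add: subset_mset_def)
  then have D: "mset \<rho>' = mset \<rho> + D"
    unfolding D_def by (simp add: subset_mset.add_diff_inverse)
  with \<open>mset \<rho> \<noteq> mset \<rho>'\<close> obtain j where "j \<in># D"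
    by fastforce
  have "set_mset D \<subseteq> set \<rho>'"
    unfolding D_def by (metis in_diffD set_mset_mset subsetI)
  with assms(2) have J: "set_mset D \<subseteq> {1..n} - I"
    by blast
  obtain \<rho>'' where \<rho>'': "mset \<rho>'' = D - {#j#}"
    using ex_mset by blast
  have "set \<rho>'' \<subseteq> set_mset D"
    using \<rho>'' by (metis set_mset_mset in_diffD subsetI)
  moreover have "h' + - h \<in> group_words \<omega> I"
    using assms(3,4) by (intro group_words_add group_words_uminus)
  ultimately have mem: "word_sum \<omega> \<rho>'' + (h' - h) \<in> split_word_sums n \<omega> I"
    unfolding split_word_sums_def using J by force
  have "mset \<rho>' = mset \<rho> + add_mset j (mset \<rho>'')"
    using D \<open>j \<in># D\<close> \<rho>'' by simp
  then have "word_sum \<omega> \<rho>' + h' - (word_sum \<omega> \<rho> + h) - \<omega> j = word_sum \<omega> \<rho>'' + (h' - h)"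
    by (simp add: word_sum_eq_sum_mset algebra_simps)
  with mem have "word_sum \<omega> \<rho>' + h' - (word_sum \<omega> \<rho> + h) - \<omega> j \<in> split_word_sums n \<omega> I"
    by (simp only:)
  moreover have "j \<in> {1..n} - I"
    using J \<open>j \<in># D\<close> by blast
  ultimately show ?thesis
    using that by blast
qed

lemma add_closure_group_words_mem:
  assumes inv: "omega_invariant n \<omega> X" and I: "I \<subseteq> backward_letters n \<omega> X"
    and "g \<in> closure (group_words \<omega> I)" "x \<in> X"
  shows "x + g \<in> X"
proof -
  have "closure (group_words \<omega> I) \<subseteq> {g. \<forall>x\<in>X. x + g \<in> X}"
  proof (rule closure_minimal)
    show "group_words \<omega> I \<subseteq> {g. \<forall>x\<in>X. x + g \<in> X}"
    proof (intro subsetI CollectI ballI)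
      fix g x assume "g \<in> group_words \<omega> I" "x \<in> X"
      then obtain \<mu> \<nu> where g: "g = word_sum \<omega> \<mu> - word_sum \<omega> \<nu>" and "set \<mu> \<subseteq> I" "set \<nu> \<subseteq> I"
        unfolding group_words_def by blast
      with \<open>x \<in> X\<close> have "x - word_sum \<omega> \<nu> + word_sum \<omega> \<mu> \<in> X"
        using I by (intro omega_invariant_add_word[OF inv] diff_word_sum_mem)
          (auto simp: is_word_def backward_letters_def)
      then show "x + g \<in> X"
        by (simp add: g algebra_simps)
    qed
    show "closed {g. \<forall>x\<in>X. x + g \<in> X}"
      using inv by (intro closed_stabilizer omega_invariant_closed)
  qed
  then show ?thesis
    using assms(3,4) by blast
qed

end

section \<open>Prime sets are translates of \<Omega>_I\<close>

definition minimal_points :: "nat \<Rightarrow> (nat \<Rightarrow> 'a::ab_group_add) \<Rightarrow> 'a set \<Rightarrow> 'a set" where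
  "minimal_points n \<omega> X = {m \<in> X. \<forall>j \<in> {1..n} - backward_letters n \<omega> X. m - \<omega> j \<notin> X}"

definition word_orbit :: "nat \<Rightarrow> (nat \<Rightarrow> 'a::comm_monoid_add) \<Rightarrow> 'a set \<Rightarrow> 'a set" where
  "word_orbit n \<omega> A = {a + word_sum \<omega> \<mu> | a \<mu>. a \<in> A \<and> is_word n \<mu>}"

context
  fixes n :: nat and \<omega> :: "nat \<Rightarrow> 'a::topological_ab_group_add"
begin

lemma descend_to_minimal:
  assumes inv: "omega_invariant n \<omega> X" and J: "J \<subseteq> {1..n}"
    and "x \<in> X" and "\<And>j. j \<in> J \<Longrightarrow> x - word_sum \<omega> (replicate (k j) j) \<notin> X"
  shows "\<exists>m \<mu>. m \<in> X \<and> (\<forall>j\<in>J. m - \<omega> j \<notin> X) \<and> set \<mu> \<subseteq> J \<and> x = m + word_sum \<omega> \<mu>"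
  using assms(3,4)
proof (induction "\<Sum>j\<in>J. k j" arbitrary: x k rule: less_induct)
  case less
  show ?case
  proof (cases "\<exists>j\<in>J. x - \<omega> j \<in> X")
    case False
    then show ?thesis
      using less.prems(1) by (intro exI[of _ x] exI[of _ "[]"]) auto
  next
    case True
    then obtain j where j: "j \<in> J" "x - \<omega> j \<in> X" ..
    have "k j \<noteq> 0"
    proof
      assume "k j = 0"
      with less.prems(2)[OF j(1)] less.prems(1) show False
        by simp
    qed
    define k' where "k' = k(j := k j - 1)"
    (* one step back along \<omega> j shortens the escape time in direction j and no other *)
    have "x - \<omega> j - word_sum \<omega> (replicate (k' l) l) \<notin> X" if "l \<in> J" for l
    proof (cases "l = j")
      case True
      then show ?thesis
        using less.prems(2)[OF j(1)] \<open>k j \<noteq> 0\<close>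
        by (cases "k j") (simp_all add: k'_def algebra_simps)
    next
      case False
      then have "x - word_sum \<omega> (replicate (k' l) l) - \<omega> j \<notin> X"
        using less.prems(2)[OF that] j(1) J
        by (intro omega_invariant_diff_omega_notin[OF inv]) (auto simp: k'_def)
      then show ?thesis
        by (simp add: algebra_simps)
    qed
    moreover have "(\<Sum>l\<in>J. k' l) < (\<Sum>l\<in>J. k l)"
      using J j(1) \<open>k j \<noteq> 0\<close>
      by (intro sum_strict_mono_ex1) (auto simp: k'_def finite_subset)
    ultimately obtain m \<mu> where "m \<in> X" "\<forall>l\<in>J. m - \<omega> l \<notin> X" "set \<mu> \<subseteq> J" "x - \<omega> j = m + word_sum \<omega> \<mu>"
      using less.hyps j(2) by blast
    then show ?thesis
      using j(1) by (intro exI[of _ m] exI[of _ "j # \<mu>"]) (auto simp: algebra_simps)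
  qed
qed

lemma omega_invariant_backward_ray:
  assumes inv: "omega_invariant n \<omega> X" and "j \<in> {1..n}"
  shows "omega_invariant n \<omega> {x. \<forall>k. x - word_sum \<omega> (replicate k j) \<in> X}"
  unfolding omega_invariant_def
proof (intro conjI ballI)
  show "closed {x. \<forall>k. x - word_sum \<omega> (replicate k j) \<in> X}"
    using omega_invariant_closed[OF inv]
    by (intro closed_Collect_all closed_Collect_mem continuous_intros)
next
  fix i x assume "i \<in> {1..n}" "x \<in> {x. \<forall>k. x - word_sum \<omega> (replicate k j) \<in> X}"
  then have "x - word_sum \<omega> (replicate k j) + \<omega> i \<in> X" for k
    by (auto intro: omega_invariant_add_omega[OF inv])
  then show "x + \<omega> i \<in> {x. \<forall>k. x - word_sum \<omega> (replicate k j) \<in> X}"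
    by (simp add: algebra_simps)
next
  fix x assume "x \<in> {x. \<forall>k. x - word_sum \<omega> (replicate k j) \<in> X}"
  then have "x - word_sum \<omega> (replicate (Suc k) j) \<in> X" for k
    by blast
  then have "x - \<omega> j - word_sum \<omega> (replicate k j) \<in> X" for k
    by (simp add: algebra_simps)
  then show "\<exists>i\<in>{1..n}. x - \<omega> i \<in> {x. \<forall>k. x - word_sum \<omega> (replicate k j) \<in> X}"
    using \<open>j \<in> {1..n}\<close> by blast
qed

lemma word_orbit_Un: "word_orbit n \<omega> (A \<union> B) = word_orbit n \<omega> A \<union> word_orbit n \<omega> B"
  unfolding word_orbit_def by blast

lemma omega_invariant_closure_word_orbit:
  assumes "i \<in> {1..n}" "\<And>a. a \<in> A \<Longrightarrow> a - \<omega> i \<in> A"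
  shows "omega_invariant n \<omega> (closure (word_orbit n \<omega> A))"
proof -
  have translate: "(\<lambda>x. x + c) ` closure (word_orbit n \<omega> A) \<subseteq> closure (word_orbit n \<omega> A)"
    if "\<And>a \<mu>. a \<in> A \<Longrightarrow> is_word n \<mu> \<Longrightarrow> a + word_sum \<omega> \<mu> + c \<in> word_orbit n \<omega> A" for c
  proof (rule image_closure_subset)
    show "continuous_on (closure (word_orbit n \<omega> A)) (\<lambda>x. x + c)"
      by (intro continuous_intros)
    show "(\<lambda>x. x + c) ` word_orbit n \<omega> A \<subseteq> closure (word_orbit n \<omega> A)"
      using that closure_subset unfolding word_orbit_def by blast
  qed simp
  have "a + word_sum \<omega> \<mu> + \<omega> i' \<in> word_orbit n \<omega> A"
    if "i' \<in> {1..n}" "a \<in> A" "is_word n \<mu>" for i' a \<mu>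
    unfolding word_orbit_def using that
    by (intro CollectI exI[of _ a] exI[of _ "\<mu> @ [i']"]) (simp add: algebra_simps)
  then have forward: "x + \<omega> i' \<in> closure (word_orbit n \<omega> A)"
    if "i' \<in> {1..n}" "x \<in> closure (word_orbit n \<omega> A)" for i' x
    using translate[of "\<omega> i'"] that by blast
  have "a + word_sum \<omega> \<mu> + - \<omega> i \<in> word_orbit n \<omega> A" if "a \<in> A" "is_word n \<mu>" for a \<mu>
    unfolding word_orbit_def using that assms(2)
    by (intro CollectI exI[of _ "a - \<omega> i"] exI[of _ \<mu>]) (simp add: algebra_simps)
  then have backward: "x - \<omega> i \<in> closure (word_orbit n \<omega> A)"
    if "x \<in> closure (word_orbit n \<omega> A)" for x
    using translate[of "- \<omega> i"] that by auto
  show ?thesis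
    unfolding omega_invariant_def using forward backward assms(1) by blast
qed

end

locale prime_omega_set =
  fixes n :: nat and \<omega> :: "nat \<Rightarrow> 'a::topological_ab_group_add" and X :: "'a set"
  assumes prime: "omega_prime n \<omega> X" and nonempty: "X \<noteq> {}" and invariant: "omega_invariant n \<omega> X"
begin

abbreviation (input) I where "I \<equiv> backward_letters n \<omega> X"
abbreviation (input) J where "J \<equiv> {1..n} - backward_letters n \<omega> X"
abbreviation (input) M where "M \<equiv> minimal_points n \<omega> X"
abbreviation (input) G where "G \<equiv> closure (group_words \<omega> (backward_letters n \<omega> X))"

lemma backward_letters_nonempty_if_minimal_point:
  assumes "m \<in> M"
  shows "I \<noteq> {}"
proof -
  have "m \<in> X"
    using assms by (simp add: minimal_points_def)
  then obtain i where "i \<in> {1..n}" "m - \<omega> i \<in> X"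
    using omega_invariant_backward_step[OF invariant] by blast
  then have "i \<in> I"
    using assms by (auto simp: minimal_points_def)
  then show ?thesis
    by blast
qed

lemma minimal_points_add_closure_group:
  assumes "m \<in> M" "g \<in> G"
  shows "m + g \<in> M"
proof -
  have "m + g - \<omega> j \<notin> X" if "j \<in> J" for j
  proof
    assume "m + g - \<omega> j \<in> X"
    then have "m + g - \<omega> j + - g \<in> X"
      using closure_group_words_uminus[OF \<open>g \<in> G\<close>]
      by (intro add_closure_group_words_mem[OF invariant subset_refl])
    then show False
      using assms(1) that by (simp add: minimal_points_def)
  qed
  moreover have "m + g \<in> X"
    using assms by (intro add_closure_group_words_mem[OF invariant subset_refl]) (auto simp: minimal_points_def)
  ultimately show ?thesis
    by (simp add: minimal_points_def)
qed

lemma omega_invariant_closure_orbit_saturated: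
  assumes "A \<subseteq> M" and saturated: "\<And>a g. a \<in> A \<Longrightarrow> g \<in> G \<Longrightarrow> a + g \<in> A"
  shows "omega_invariant n \<omega> (closure (word_orbit n \<omega> A))"
proof (cases "A = {}")
  case True
  then show ?thesis
    by (simp add: word_orbit_def omega_invariant_empty)
next
  case False
  then obtain i where "i \<in> I"
    using assms(1) backward_letters_nonempty_if_minimal_point by blast
  then have "- \<omega> i \<in> G"
    using word_sum_mem_group_words[of "[i]"] closure_group_words_uminus closure_subset by fastforce
  then have "a - \<omega> i \<in> A" if "a \<in> A" for a
    using saturated[OF that \<open>- \<omega> i \<in> G\<close>] by simp
  then show ?thesis
    using \<open>i \<in> I\<close> by (intro omega_invariant_closure_word_orbit) (auto simp: backward_letters_def)
qed

(* Points of X either descend to a minimal point or lie on an infinite backward ray in a direction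
   j \<in> J; the rays are \<omega>-invariant but cannot contain X, since j is not a backward letter. *)
lemma subset_closure_orbit_minimal_points: "X \<subseteq> closure (word_orbit n \<omega> M)"
proof -
  define ray where "ray j = {x. \<forall>k. x - word_sum \<omega> (replicate k j) \<in> X}" for j
  have "X \<subseteq> \<Union>(insert (closure (word_orbit n \<omega> M)) (ray ` J))"
  proof
    fix x assume "x \<in> X"
    show "x \<in> \<Union>(insert (closure (word_orbit n \<omega> M)) (ray ` J))"
    proof (cases "\<exists>j\<in>J. x \<in> ray j")
      case False
      then obtain k where "\<forall>j\<in>J. x - word_sum \<omega> (replicate (k j) j) \<notin> X"
        using bchoice[of J "\<lambda>j k. x - word_sum \<omega> (replicate k j) \<notin> X"] by (auto simp: ray_def)
      then obtain m \<mu> where "m \<in> X" "\<forall>j\<in>J. m - \<omega> j \<notin> X" "set \<mu> \<subseteq> J" "x = m + word_sum \<omega> \<mu>"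
        using descend_to_minimal[OF invariant, of J x k] \<open>x \<in> X\<close> by blast
      then have "x \<in> word_orbit n \<omega> M"
        unfolding word_orbit_def minimal_points_def is_word_def by blast
      then show ?thesis
        using closure_subset by blast
    qed blast
  qed
  moreover have "omega_invariant n \<omega> (closure (word_orbit n \<omega> M))"
    by (intro omega_invariant_closure_orbit_saturated minimal_points_add_closure_group) auto
  moreover have "omega_invariant n \<omega> (ray j)" if "j \<in> J" for j
    unfolding ray_def using that by (intro omega_invariant_backward_ray[OF invariant]) auto
  ultimately have "\<exists>Y\<in>insert (closure (word_orbit n \<omega> M)) (ray ` J). X \<subseteq> Y"
    by (intro omega_prime_finite_cover[OF prime nonempty]) auto
  then obtain Y where Y: "Y \<in> insert (closure (word_orbit n \<omega> M)) (ray ` J)" "X \<subseteq> Y" ..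
  have "\<not> X \<subseteq> ray j" if "j \<in> J" for j
  proof
    assume "X \<subseteq> ray j"
    then have "x - word_sum \<omega> (replicate 1 j) \<in> X" if "x \<in> X" for x
      using that unfolding ray_def by blast
    then have "x - \<omega> j \<in> X" if "x \<in> X" for x
      using that by simp
    then show False
      using \<open>j \<in> J\<close> by (auto simp: backward_letters_def)
  qed
  then show ?thesis
    using Y by blast
qed

lemma minimal_points_nonempty: "M \<noteq> {}"
proof
  assume "M = {}"
  then have "word_orbit n \<omega> M = {}"
    by (simp add: word_orbit_def)
  then show False
    using subset_closure_orbit_minimal_points nonempty by simp
qed

(* A letter j \<in> J in \<mu> could be dropped, giving a backward step of a + \<omega>\<^sub>\<mu> in X. *)
lemma word_letters_backward:
  assumes "a \<in> X" "is_word n \<mu>" "\<forall>j\<in>J. a + word_sum \<omega> \<mu> - \<omega> j \<notin> X"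
  shows "set \<mu> \<subseteq> I"
proof
  fix j assume "j \<in> set \<mu>"
  show "j \<in> I"
  proof (rule ccontr)
    assume "j \<notin> I"
    have "a + word_sum \<omega> (remove1 j \<mu>) \<in> X"
      using assms(1,2) set_remove1_subset[of j \<mu>]
      by (intro omega_invariant_add_word[OF invariant]) (auto simp: is_word_def)
    moreover have "a + word_sum \<omega> \<mu> - \<omega> j = a + word_sum \<omega> (remove1 j \<mu>)"
      using word_sum_remove1[OF \<open>j \<in> set \<mu>\<close>] by (simp add: algebra_simps)
    moreover have "a + word_sum \<omega> \<mu> - \<omega> j \<notin> X"
      using assms(2,3) \<open>j \<notin> I\<close> \<open>j \<in> set \<mu>\<close> by (auto simp: is_word_def)
    ultimately show False
      by metis
  qed
qed

(* Near a minimal point no J-step back stays in X, so nearby orbit points use I-letters only. *)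
lemma minimal_point_approximation:
  assumes "A \<subseteq> X" "x \<in> closure (word_orbit n \<omega> A)" "x \<in> M" "open U" "x \<in> U"
  obtains a g where "a \<in> A" "g \<in> G" "a + g \<in> U"
proof -
  have "open (\<Inter>j\<in>J. {y. y - \<omega> j \<in> - X})"
    using omega_invariant_closed[OF invariant]
    by (intro open_INT finite_Diff finite_atLeastAtMost ballI open_Collect_mem continuous_intros) auto
  with assms(4) have "open (U \<inter> (\<Inter>j\<in>J. {y. y - \<omega> j \<in> - X}))"
    by blast
  moreover have "x \<in> U \<inter> (\<Inter>j\<in>J. {y. y - \<omega> j \<in> - X})"
    using assms(3,5) by (auto simp: minimal_points_def)
  ultimately have "(U \<inter> (\<Inter>j\<in>J. {y. y - \<omega> j \<in> - X})) \<inter> word_orbit n \<omega> A \<noteq> {}"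
    using assms(2) open_Int_closure_eq_empty by blast
  then obtain a \<mu> where "a \<in> A" "is_word n \<mu>" and y: "a + word_sum \<omega> \<mu> \<in> U"
    and "a + word_sum \<omega> \<mu> \<in> (\<Inter>j\<in>J. {y. y - \<omega> j \<in> - X})"
    unfolding word_orbit_def by blast
  then have "set \<mu> \<subseteq> I"
    using assms(1) by (intro word_letters_backward) blast+
  then have "word_sum \<omega> \<mu> \<in> G"
    using word_sum_mem_group_words closure_subset by blast
  with \<open>a \<in> A\<close> y show ?thesis
    using that by blast
qed

lemma prime_split_minimal_points:
  assumes saturated: "\<forall>y\<in>W. \<forall>g\<in>G. y + g \<in> W"
  shows "X \<subseteq> closure (word_orbit n \<omega> (M - W)) \<or> X \<subseteq> closure (word_orbit n \<omega> (M \<inter> W))"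
proof -
  have "word_orbit n \<omega> M = word_orbit n \<omega> (M - W) \<union> word_orbit n \<omega> (M \<inter> W)"
    by (simp add: word_orbit_Un[symmetric] Un_Diff_Int)
  then have "X \<subseteq> closure (word_orbit n \<omega> (M - W)) \<union> closure (word_orbit n \<omega> (M \<inter> W))"
    using subset_closure_orbit_minimal_points by (simp add: closure_Un)
  moreover have "omega_invariant n \<omega> (closure (word_orbit n \<omega> (M - W)))"
  proof (rule omega_invariant_closure_orbit_saturated)
    show "a + g \<in> M - W" if "a \<in> M - W" "g \<in> G" for a g
    proof -
      have "a + g + - g \<notin> W"
        using that by simp
      then show ?thesis
        using that saturated closure_group_words_uminus minimal_points_add_closure_group by blast
    qed
  qed blast
  moreover have "omega_invariant n \<omega> (closure (word_orbit n \<omega> (M \<inter> W)))"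
  proof (rule omega_invariant_closure_orbit_saturated)
    show "a + g \<in> M \<inter> W" if "a \<in> M \<inter> W" "g \<in> G" for a g
      using that minimal_points_add_closure_group saturated by blast
  qed blast
  ultimately show ?thesis
    using prime unfolding omega_prime_def by blast
qed

(* Otherwise a G-saturated open set around q whose closure misses p splits M into two halves;
   by primeness X lies in the orbit closure of one half, which then approaches a minimal point
   of the other half. *)
lemma minimal_points_same_coset:
  assumes "p \<in> M" "q \<in> M"
  shows "q - p \<in> G"
proof (rule ccontr)
  assume "q - p \<notin> G"
  then have "p - q \<notin> G"
    using closure_group_words_uminus[of "p - q"] by auto
  with closed_closure zero_mem_closure_group_words closure_group_words_add
  obtain W where W: "open W" "q \<in> W" "p \<notin> closure W"
    and saturated: "\<forall>y\<in>W. \<forall>g\<in>G. y + g \<in> W"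
    by (rule saturated_open_separation)
  from saturated consider "X \<subseteq> closure (word_orbit n \<omega> (M - W))" | "X \<subseteq> closure (word_orbit n \<omega> (M \<inter> W))"
    by (blast dest: prime_split_minimal_points)
  then show False
  proof cases
    case 1
    have "M - W \<subseteq> X" "q \<in> closure (word_orbit n \<omega> (M - W))"
      using 1 assms(2) by (auto simp: minimal_points_def)
    then obtain a g where "a \<in> M - W" "g \<in> G" "a + g \<in> W"
      using assms(2) W(1,2) by (rule minimal_point_approximation)
    then have "a + g + - g \<in> W"
      using saturated closure_group_words_uminus by blast
    then show False
      using \<open>a \<in> M - W\<close> by simp
  next
    case 2
    have "M \<inter> W \<subseteq> X" "p \<in> closure (word_orbit n \<omega> (M \<inter> W))"
      using 2 assms(1) by (auto simp: minimal_points_def)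
    moreover have "p \<in> - closure W"
      using W(3) by simp
    ultimately obtain a g where "a \<in> M \<inter> W" "g \<in> G" "a + g \<in> - closure W"
      using assms(1) open_Compl[OF closed_closure] by (metis minimal_point_approximation)
    then show False
      using saturated closure_subset by blast
  qed
qed

lemma eq_translate_Omega_set_backward_letters:
  assumes "p \<in> M"
  shows "X = (\<lambda>x. p + x) ` Omega_set n \<omega> I"
proof
  have I: "I \<subseteq> {1..n}" "0 \<in> Omega_set n \<omega> I"
    using backward_letters_subset
      zero_mem_Omega_set[OF backward_letters_nonempty_if_minimal_point[OF assms] backward_letters_subset]
    by blast+
  show "(\<lambda>x. p + x) ` Omega_set n \<omega> I \<subseteq> X"
    using assms add_Omega_set_mem[OF invariant subset_refl] by (auto simp: minimal_points_def)
  have "closure (word_orbit n \<omega> M) \<subseteq> {y. y - p \<in> Omega_set n \<omega> I}"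
  proof (rule closure_minimal)
    show "closed {y. y - p \<in> Omega_set n \<omega> I}"
      by (intro closed_Collect_mem Omega_set_closed continuous_intros)
    show "word_orbit n \<omega> M \<subseteq> {y. y - p \<in> Omega_set n \<omega> I}"
    proof (clarsimp simp: word_orbit_def)
      fix m \<mu> assume "m \<in> M" "is_word n \<mu>"
      then have "(m - p) + word_sum \<omega> \<mu> \<in> Omega_set n \<omega> I"
        using minimal_points_same_coset[OF assms] closure_group_words_subset_Omega_set[OF I]
        by (intro Omega_set_add word_sum_mem_Omega_set I) auto
      then show "m + word_sum \<omega> \<mu> - p \<in> Omega_set n \<omega> I"
        by (simp add: algebra_simps)
    qed
  qed
  then have "x - p \<in> Omega_set n \<omega> I" if "x \<in> X" for x
    using that subset_closure_orbit_minimal_points by blast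
  then show "X \<subseteq> (\<lambda>x. p + x) ` Omega_set n \<omega> I"
    by (auto intro: image_eqI[of _ _ "_ - p"])
qed

end

lemma prime_eq_translate_Omega_set:
  fixes \<omega> :: "nat \<Rightarrow> 'a::topological_ab_group_add"
  assumes "omega_prime n \<omega> X" "X \<noteq> {}" "omega_invariant n \<omega> X"
  shows "backward_letters n \<omega> X \<noteq> {} \<and> (\<exists>p. X = (\<lambda>x. p + x) ` Omega_set n \<omega> (backward_letters n \<omega> X))"
proof -
  interpret prime_omega_set n \<omega> X
    using assms by unfold_locales
  show ?thesis
    using minimal_points_nonempty backward_letters_nonempty_if_minimal_point
      eq_translate_Omega_set_backward_letters by blast
qed

lemma omega_prime_iff_translate_Omega_set:
  fixes \<omega> :: "nat \<Rightarrow> 'a::topological_ab_group_add"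
  assumes "X \<noteq> {}" "omega_invariant n \<omega> X"
  shows "omega_prime n \<omega> X \<longleftrightarrow> (\<exists>\<gamma> I. I \<noteq> {} \<and> I \<subseteq> {1..n} \<and> X = (\<lambda>x. \<gamma> + x) ` Omega_set n \<omega> I)"
proof
  assume "omega_prime n \<omega> X"
  then obtain p where "backward_letters n \<omega> X \<noteq> {}"
    and "X = (\<lambda>x. p + x) ` Omega_set n \<omega> (backward_letters n \<omega> X)"
    using prime_eq_translate_Omega_set assms by blast
  then show "\<exists>\<gamma> I. I \<noteq> {} \<and> I \<subseteq> {1..n} \<and> X = (\<lambda>x. \<gamma> + x) ` Omega_set n \<omega> I"
    using backward_letters_subset[of n \<omega> X] by blast
next
  assume "\<exists>\<gamma> I. I \<noteq> {} \<and> I \<subseteq> {1..n} \<and> X = (\<lambda>x. \<gamma> + x) ` Omega_set n \<omega> I"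
  then obtain \<gamma> I where "I \<noteq> {}" "I \<subseteq> {1..n}" and X: "X = (\<lambda>x. \<gamma> + x) ` Omega_set n \<omega> I"
    by blast
  show "omega_prime n \<omega> X"
    unfolding X by (intro omega_prime_if_common_forward_approximation
        common_forward_approximation_translate_Omega_set \<open>I \<noteq> {}\<close> \<open>I \<subseteq> {1..n}\<close>)
qed

lemma omega_prime_iff_common_forward_approximation:
  fixes \<omega> :: "nat \<Rightarrow> 'a::topological_ab_group_add"
  assumes "X \<noteq> {}" "omega_invariant n \<omega> X"
  shows "omega_prime n \<omega> X \<longleftrightarrow> common_forward_approximation n \<omega> X"
proof
  assume "omega_prime n \<omega> X"
  then obtain \<gamma> I where "I \<noteq> {}" "I \<subseteq> {1..n}" and X: "X = (\<lambda>x. \<gamma> + x) ` Omega_set n \<omega> I"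
    using omega_prime_iff_translate_Omega_set[OF assms] by blast
  show "common_forward_approximation n \<omega> X"
    unfolding X by (rule common_forward_approximation_translate_Omega_set) fact+
qed (rule omega_prime_if_common_forward_approximation)

section \<open>Decomposition of \<Omega>_I in locally compact groups\<close>

context
  fixes n :: nat and \<omega> :: "nat \<Rightarrow> 'a::{topological_ab_group_add, first_countable_topology}"
begin

(* By Dickson's lemma two of infinitely many J-multisets are nested, and for a compact K their
   values can be chosen close; the difference then exhibits some -\<omega> j, j \<in> J, near the
   split word sums. *)
lemma finite_multisets_reaching_compact:
  assumes "compact K"
    and far: "\<And>j. j \<in> {1..n} - I \<Longrightarrow> - \<omega> j \<notin> closure (split_word_sums n \<omega> I)"
  shows "finite {mset \<rho> | \<rho>. set \<rho> \<subseteq> {1..n} - I \<and> (\<exists>h\<in>group_words \<omega> I. word_sum \<omega> \<rho> + h \<in> K)}"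
    (is "finite ?E")
proof (rule ccontr)
  let ?J = "{1..n} - I"
  let ?S = "closure (split_word_sums n \<omega> I)"
  assume "infinite ?E"
  then obtain f :: "nat \<Rightarrow> nat multiset" where "inj f" "range f \<subseteq> ?E"
    using infinite_countable_subset by blast
  then have "\<forall>k. \<exists>\<rho> h. f k = mset \<rho> \<and> set \<rho> \<subseteq> ?J \<and> h \<in> group_words \<omega> I \<and> word_sum \<omega> \<rho> + h \<in> K"
    by blast
  then obtain \<rho> h where \<rho>h: "\<And>k. f k = mset (\<rho> k) \<and> set (\<rho> k) \<subseteq> ?J \<and> h k \<in> group_words \<omega> I
      \<and> word_sum \<omega> (\<rho> k) + h k \<in> K"
    by metis
  let ?Q = "\<Inter>j\<in>?J. {w. w - \<omega> j \<in> - ?S}"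
  have Q: "open ?Q" "0 \<in> ?Q"
  proof -
    show "open ?Q"
      by (intro open_INT finite_Diff finite_atLeastAtMost ballI open_Collect_mem continuous_intros) auto
    show "0 \<in> ?Q"
      using far by simp
  qed
  have J: "finite ?J" "\<And>k. set_mset (f k) \<subseteq> ?J" and K: "\<And>k. word_sum \<omega> (\<rho> k) + h k \<in> K"
    using \<rho>h by auto
  obtain k l where sub: "f k \<subset># f l"
    and close: "word_sum \<omega> (\<rho> l) + h l - (word_sum \<omega> (\<rho> k) + h k) \<in> ?Q"
    using \<open>inj f\<close> J \<open>compact K\<close> K Q by (rule multiset_chain_with_close_values)
  have "mset (\<rho> k) \<subset># mset (\<rho> l)" "set (\<rho> l) \<subseteq> ?J" "h k \<in> group_words \<omega> I" "h l \<in> group_words \<omega> I"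
    using sub \<rho>h by simp_all
  then obtain j where "j \<in> ?J"
    and "word_sum \<omega> (\<rho> l) + h l - (word_sum \<omega> (\<rho> k) + h k) - \<omega> j \<in> split_word_sums n \<omega> I"
    by (rule strict_submultiset_diff_mem_split_word_sums)
  then show False
    using close closure_subset by blast
qed

(* Local compactness: near z only finitely many J-multisets occur, so the closed set of
   their G-cosets captures z. *)
lemma Omega_set_decomposition:
  assumes lc: "locally_compact_space (euclidean :: 'a topology)"
    and I: "I \<subseteq> {1..n}" "0 \<in> Omega_set n \<omega> I"
    and maximal: "\<And>j. j \<in> {1..n} - I \<Longrightarrow> - \<omega> j \<notin> Omega_set n \<omega> I"
    and "z \<in> Omega_set n \<omega> I"
  obtains \<rho> g where "set \<rho> \<subseteq> {1..n} - I" "g \<in> closure (group_words \<omega> I)" "z = word_sum \<omega> \<rho> + g"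
proof -
  let ?S = "split_word_sums n \<omega> I"
  let ?G = "closure (group_words \<omega> I)"
  have "\<exists>U K. open U \<and> compact K \<and> z \<in> U \<and> U \<subseteq> K"
    using lc unfolding locally_compact_space_def by (auto simp: compactin_euclidean_iff)
  then obtain U K where UK: "open U" "compact K" "z \<in> U" "U \<subseteq> K"
    by blast
  have "closure ?S \<subseteq> Omega_set n \<omega> I"
    using split_word_sums_subset_Omega_set[OF I] Omega_set_closed by (rule closure_minimal)
  then have "finite {mset \<rho> | \<rho>. set \<rho> \<subseteq> {1..n} - I \<and> (\<exists>h\<in>group_words \<omega> I. word_sum \<omega> \<rho> + h \<in> K)}"
    (is "finite ?E")
    using maximal by (intro finite_multisets_reaching_compact UK(2)) blast
  then have "closed (\<Union>A\<in>?E. {y. y - sum_mset (image_mset \<omega> A) \<in> ?G})"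
    by (intro closed_UN ballI closed_Collect_mem continuous_intros closed_closure)
  moreover have "U \<inter> ?S \<subseteq> (\<Union>A\<in>?E. {y. y - sum_mset (image_mset \<omega> A) \<in> ?G})"
  proof
    fix y assume "y \<in> U \<inter> ?S"
    then obtain \<rho> h where "y = word_sum \<omega> \<rho> + h" "set \<rho> \<subseteq> {1..n} - I" "h \<in> group_words \<omega> I" "y \<in> U"
      unfolding split_word_sums_def by blast
    then have "mset \<rho> \<in> ?E"
      using UK(4) by blast
    moreover have "y - sum_mset (image_mset \<omega> (mset \<rho>)) \<in> ?G"
      using \<open>y = word_sum \<omega> \<rho> + h\<close> \<open>h \<in> group_words \<omega> I\<close> closure_subset
      by (auto simp: word_sum_eq_sum_mset)
    ultimately show "y \<in> (\<Union>A\<in>?E. {y. y - sum_mset (image_mset \<omega> A) \<in> ?G})"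
      by blast
  qed
  moreover have "z \<in> closure (U \<inter> ?S)"
    using open_Int_closure_subset[OF UK(1)] UK(3) \<open>z \<in> Omega_set n \<omega> I\<close>
      Omega_set_subset_closure_Omega_words closure_mono[OF Omega_words_subset_split_word_sums] by blast
  ultimately have "z \<in> (\<Union>A\<in>?E. {y. y - sum_mset (image_mset \<omega> A) \<in> ?G})"
    using closure_minimal by blast
  then obtain \<rho> where "set \<rho> \<subseteq> {1..n} - I" "z - word_sum \<omega> \<rho> \<in> ?G"
    by (auto simp: word_sum_eq_sum_mset)
  then show ?thesis
    using that[of \<rho> "z - word_sum \<omega> \<rho>"] by simp
qed

lemma asymptotic_backward_words_in_coset:
  assumes I: "I \<subseteq> backward_letters n \<omega> X"
    and "x0 \<in> X" "x1 \<in> X" "x0 - x1 \<in> closure (group_words \<omega> I)"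
  obtains \<mu> \<nu> :: "nat \<Rightarrow> nat list"
  where "\<forall>k. set (\<mu> k) \<subseteq> I \<and> set (\<nu> k) \<subseteq> I \<and> x0 - word_sum \<omega> (\<mu> k) \<in> X \<and> x1 - word_sum \<omega> (\<nu> k) \<in> X"
    "(\<lambda>k. (x0 - word_sum \<omega> (\<mu> k)) - (x1 - word_sum \<omega> (\<nu> k))) \<longlonglongrightarrow> 0"
proof -
  obtain x where "\<forall>k. x k \<in> group_words \<omega> I" and x: "x \<longlonglongrightarrow> x0 - x1"
    using assms(4) unfolding closure_sequential by blast
  then have "\<forall>k. \<exists>\<mu> \<nu>. x k = word_sum \<omega> \<mu> - word_sum \<omega> \<nu> \<and> set \<mu> \<subseteq> I \<and> set \<nu> \<subseteq> I"
    unfolding group_words_def by blast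
  then have "\<exists>\<mu>. \<forall>k. \<exists>\<nu>. x k = word_sum \<omega> (\<mu> k) - word_sum \<omega> \<nu> \<and> set (\<mu> k) \<subseteq> I \<and> set \<nu> \<subseteq> I"
    by (rule choice)
  then obtain \<mu> where "\<forall>k. \<exists>\<nu>. x k = word_sum \<omega> (\<mu> k) - word_sum \<omega> \<nu> \<and> set (\<mu> k) \<subseteq> I \<and> set \<nu> \<subseteq> I" ..
  then have "\<exists>\<nu>. \<forall>k. x k = word_sum \<omega> (\<mu> k) - word_sum \<omega> (\<nu> k) \<and> set (\<mu> k) \<subseteq> I \<and> set (\<nu> k) \<subseteq> I"
    by (rule choice)
  then obtain \<nu> where \<mu>\<nu>: "\<forall>k. x k = word_sum \<omega> (\<mu> k) - word_sum \<omega> (\<nu> k) \<and> set (\<mu> k) \<subseteq> I \<and> set (\<nu> k) \<subseteq> I" ..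
  have "\<forall>k. set (\<mu> k) \<subseteq> I \<and> set (\<nu> k) \<subseteq> I \<and> x0 - word_sum \<omega> (\<mu> k) \<in> X \<and> x1 - word_sum \<omega> (\<nu> k) \<in> X"
    using \<mu>\<nu> diff_word_sum_mem[OF I] \<open>x0 \<in> X\<close> \<open>x1 \<in> X\<close> by blast
  moreover have "(\<lambda>k. (x0 - x1) - x k) \<longlonglongrightarrow> (x0 - x1) - (x0 - x1)"
    by (intro tendsto_diff tendsto_const x)
  moreover have "(\<lambda>k. (x0 - x1) - x k) = (\<lambda>k. (x0 - word_sum \<omega> (\<mu> k)) - (x1 - word_sum \<omega> (\<nu> k)))"
    using \<mu>\<nu> by (simp add: fun_eq_iff algebra_simps)
  ultimately show ?thesis
    using that by simp
qed

lemma prime_point_decomposition: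
  assumes lc: "locally_compact_space (euclidean :: 'a topology)"
    and prime: "omega_prime n \<omega> X" and "X \<noteq> {}" and inv: "omega_invariant n \<omega> X"
  defines "I \<equiv> backward_letters n \<omega> X"
  obtains p where "\<forall>\<gamma>\<in>X. \<exists>\<rho> e. set \<rho> \<subseteq> {1..n} - I \<and> e \<in> closure (group_words \<omega> I)
      \<and> p + e \<in> X \<and> \<gamma> = p + e + word_sum \<omega> \<rho>"
proof -
  obtain p where "I \<noteq> {}" and X: "X = (\<lambda>x. p + x) ` Omega_set n \<omega> I"
    using prime_eq_translate_Omega_set[OF prime \<open>X \<noteq> {}\<close> inv] unfolding I_def by blast
  have I: "I \<subseteq> {1..n}" "0 \<in> Omega_set n \<omega> I"
    using backward_letters_subset zero_mem_Omega_set[OF \<open>I \<noteq> {}\<close>] unfolding I_def by blast+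
  have maximal: "\<And>j. j \<in> {1..n} - I \<Longrightarrow> - \<omega> j \<notin> Omega_set n \<omega> I"
    unfolding I_def by (rule neg_omega_notin_Omega_set[OF inv])
  have "\<exists>\<rho> e. set \<rho> \<subseteq> {1..n} - I \<and> e \<in> closure (group_words \<omega> I) \<and> p + e \<in> X \<and> \<gamma> = p + e + word_sum \<omega> \<rho>"
    if "\<gamma> \<in> X" for \<gamma>
  proof -
    obtain z where z: "z \<in> Omega_set n \<omega> I" "\<gamma> = p + z"
      using \<open>\<gamma> \<in> X\<close> X by blast
    obtain \<rho> e where "set \<rho> \<subseteq> {1..n} - I" "e \<in> closure (group_words \<omega> I)" "z = word_sum \<omega> \<rho> + e"
      by (rule Omega_set_decomposition[OF lc I maximal z(1)])
    moreover have "p + e \<in> X"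
      using \<open>e \<in> _\<close> X closure_group_words_subset_Omega_set[OF I] by blast
    ultimately show ?thesis
      using z(2) by (metis add.assoc add.commute)
  qed
  then show ?thesis
    using that by blast
qed

(* Strip the J-words from both points; what remains lies in one coset p + G. *)
lemma asymptotic_backward_words_if_prime:
  assumes lc: "locally_compact_space (euclidean :: 'a topology)"
    and prime: "omega_prime n \<omega> X" and "X \<noteq> {}" and inv: "omega_invariant n \<omega> X"
  shows "asymptotic_backward_words n \<omega> X"
  unfolding asymptotic_backward_words_def
proof (intro ballI)
  fix \<gamma>0 \<gamma>1 assume "\<gamma>0 \<in> X" "\<gamma>1 \<in> X"
  define I where "I = backward_letters n \<omega> X"
  obtain p where decompose: "\<forall>\<gamma>\<in>X. \<exists>\<rho> e. set \<rho> \<subseteq> {1..n} - I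
      \<and> e \<in> closure (group_words \<omega> I) \<and> p + e \<in> X \<and> \<gamma> = p + e + word_sum \<omega> \<rho>"
    unfolding I_def by (rule prime_point_decomposition[OF assms])
  obtain \<rho>0 e0 where \<rho>0: "set \<rho>0 \<subseteq> {1..n} - I" and "e0 \<in> closure (group_words \<omega> I)" "p + e0 \<in> X"
    and \<gamma>0: "\<gamma>0 = p + e0 + word_sum \<omega> \<rho>0"
    using decompose \<open>\<gamma>0 \<in> X\<close> by blast
  obtain \<rho>1 e1 where \<rho>1: "set \<rho>1 \<subseteq> {1..n} - I" and "e1 \<in> closure (group_words \<omega> I)" "p + e1 \<in> X"
    and \<gamma>1: "\<gamma>1 = p + e1 + word_sum \<omega> \<rho>1"
    using decompose \<open>\<gamma>1 \<in> X\<close> by blast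
  have "(p + e0) - (p + e1) \<in> closure (group_words \<omega> I)"
    using closure_group_words_diff[OF \<open>e0 \<in> _\<close> \<open>e1 \<in> _\<close>] by simp
  with \<open>p + e0 \<in> X\<close> \<open>p + e1 \<in> X\<close> obtain \<mu> \<nu> where
    words: "\<forall>k. set (\<mu> k) \<subseteq> I \<and> set (\<nu> k) \<subseteq> I
      \<and> p + e0 - word_sum \<omega> (\<mu> k) \<in> X \<and> p + e1 - word_sum \<omega> (\<nu> k) \<in> X"
    and limit: "(\<lambda>k. (p + e0 - word_sum \<omega> (\<mu> k)) - (p + e1 - word_sum \<omega> (\<nu> k))) \<longlonglongrightarrow> 0"
    unfolding I_def by (rule asymptotic_backward_words_in_coset[OF subset_refl])
  define \<mu>s where "\<mu>s k = \<rho>0 @ \<mu> k" for k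
  define \<nu>s where "\<nu>s k = \<rho>1 @ \<nu> k" for k
  have strip: "\<gamma>0 - word_sum \<omega> (\<mu>s k) = p + e0 - word_sum \<omega> (\<mu> k)"
    "\<gamma>1 - word_sum \<omega> (\<nu>s k) = p + e1 - word_sum \<omega> (\<nu> k)" for k
    unfolding \<gamma>0 \<gamma>1 \<mu>s_def \<nu>s_def by (simp_all add: algebra_simps)
  have "is_word n (\<mu>s k) \<and> is_word n (\<nu>s k)" for k
    using backward_letters_subset[of n \<omega> X] \<rho>0 \<rho>1 words[rule_format, of k]
    unfolding is_word_def \<mu>s_def \<nu>s_def I_def by auto
  then have "\<forall>k. is_word n (\<mu>s k) \<and> is_word n (\<nu>s k)
      \<and> \<gamma>0 - word_sum \<omega> (\<mu>s k) \<in> X \<and> \<gamma>1 - word_sum \<omega> (\<nu>s k) \<in> X"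
    unfolding strip using words by blast
  moreover have "(\<lambda>k. (\<gamma>0 - word_sum \<omega> (\<mu>s k)) - (\<gamma>1 - word_sum \<omega> (\<nu>s k))) \<longlonglongrightarrow> 0"
    unfolding strip by (rule limit)
  ultimately show "\<exists>\<mu>s \<nu>s :: nat \<Rightarrow> nat list.
      (\<forall>k. is_word n (\<mu>s k) \<and> is_word n (\<nu>s k)
           \<and> \<gamma>0 - word_sum \<omega> (\<mu>s k) \<in> X \<and> \<gamma>1 - word_sum \<omega> (\<nu>s k) \<in> X)
      \<and> (\<lambda>k. (\<gamma>0 - word_sum \<omega> (\<mu>s k)) - (\<gamma>1 - word_sum \<omega> (\<nu>s k))) \<longlonglongrightarrow> 0"
    by (intro exI conjI)
qed

lemma omega_prime_iff_asymptotic_backward_words: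
  assumes "locally_compact_space (euclidean :: 'a topology)" "X \<noteq> {}" "omega_invariant n \<omega> X"
  shows "omega_prime n \<omega> X \<longleftrightarrow> asymptotic_backward_words n \<omega> X"
  using asymptotic_backward_words_if_prime[OF assms(1) _ assms(2,3)] omega_prime_if_asymptotic_backward_words
  by blast

end

theorem proposition4p11:
  fixes \<omega> :: "nat \<Rightarrow> 'a::{topological_ab_group_add, t2_space, second_countable_topology}"
    and X :: "'a set" and n :: nat
  assumes lc: "locally_compact_space (euclidean :: 'a topology)"
    and n2: "n \<ge> 2"
    and ne: "X \<noteq> {}"
    and inv: "omega_invariant n \<omega> X"
  shows "(omega_prime n \<omega> X
          \<longleftrightarrow> (\<forall>\<gamma>0\<in>X. \<forall>\<gamma>1\<in>X. \<forall>U0 U1. open U0 \<longrightarrow> open U1 \<longrightarrow> \<gamma>0 \<in> U0 \<longrightarrow> \<gamma>1 \<in> U1 \<longrightarrow>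
                (\<exists>\<gamma>\<in>X. \<exists>\<mu> \<nu>. is_word n \<mu> \<and> is_word n \<nu> \<and>
                    \<gamma> + word_sum \<omega> \<mu> \<in> U0 \<and> \<gamma> + word_sum \<omega> \<nu> \<in> U1)))
       \<and> (omega_prime n \<omega> X
          \<longleftrightarrow> (\<forall>\<gamma>0\<in>X. \<forall>\<gamma>1\<in>X. \<exists>\<mu>s \<nu>s :: nat \<Rightarrow> nat list.
                (\<forall>k. is_word n (\<mu>s k) \<and> is_word n (\<nu>s k)
                     \<and> \<gamma>0 - word_sum \<omega> (\<mu>s k) \<in> X \<and> \<gamma>1 - word_sum \<omega> (\<nu>s k) \<in> X)
                \<and> (\<lambda>k. (\<gamma>0 - word_sum \<omega> (\<mu>s k)) - (\<gamma>1 - word_sum \<omega> (\<nu>s k))) \<longlonglongrightarrow> 0))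
       \<and> (omega_prime n \<omega> X
          \<longleftrightarrow> (\<exists>\<gamma> I. I \<noteq> {} \<and> I \<subseteq> {1..n} \<and> X = (\<lambda>x. \<gamma> + x) ` Omega_set n \<omega> I))"
  unfolding common_forward_approximation_def[symmetric] asymptotic_backward_words_def[symmetric]
  by (intro conjI omega_prime_iff_common_forward_approximation[OF ne inv]
      omega_prime_iff_asymptotic_backward_words[OF lc ne inv] omega_prime_iff_translate_Omega_set[OF ne inv])

end
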